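(* Consider binary classification with $\mathcal Y=\{-1,+1\}$ and suppose ${\mathbb P}(Y=+1)={\mathbb P}(Y=-1)$. Let $f(v)=\tfrac12|v-1|$ (Total Variation). Then a maximizer $h^*_f\in\arg\max_h D_f(P_{h\times Y}\,\|\,Q_{h\times Y})$, the maximum being over all classifiers $h:\mathcal X\to\{-1,+1\}$, is the Bayes optimal classifier, i.e. $h^*_f\in\arg\max_h {\mathbb P}(h(X)=Y)$.
   Context: $(X,Y)$ is a random pair with features $X\in\mathcal X$ and label $Y\in\{-1,+1\}$. A classifier is a measurable map $h:\mathcal X\to\{-1,+1\}$. $P_{h\times Y}$ denotes the joint distribution of $(h(X),Y)$ on $\{-1,+1\}^2$, i.e. $P_{h\times Y}(y,y')={\mathbb P}(h(X)=y,Y=y')$, and $Q_{h\times Y}$ the product of its marginals, $Q_{h\times Y}(y,y')={\mathbb P}(h(X)=y)\,{\mathbb P}(Y=y')$. For a convex $f$ with $f(1)=0$ and distributions $P,Q$ on a finite set with masses $p,q$, $D_f(P\|Q)=\sum_z q(z) f(p(z)/q(z))$. For $f(v)=\frac12|v-1|$ this is $D_f(P\|Q)=\frac12\sum_z|p(z)-q(z)|$. *)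

theory Defs
  imports "HOL-Probability.Probability"
begin

definition labels :: "int set" where "labels = {-1, 1}"

definition classifier :: "'b measure \<Rightarrow> ('b \<Rightarrow> int) \<Rightarrow> bool" where
  "classifier N h \<longleftrightarrow> h \<in> measurable N (count_space UNIV) \<and> (\<forall>x\<in>space N. h x \<in> labels)"

definition P_joint :: "'a measure \<Rightarrow> ('a \<Rightarrow> 'b) \<Rightarrow> ('a \<Rightarrow> int) \<Rightarrow> ('b \<Rightarrow> int) \<Rightarrow> int \<Rightarrow> int \<Rightarrow> real" where
  "P_joint M X Y h y y' = measure M {\<omega> \<in> space M. h (X \<omega>) = y \<and> Y \<omega> = y'}"

definition Q_prod :: "'a measure \<Rightarrow> ('a \<Rightarrow> 'b) \<Rightarrow> ('a \<Rightarrow> int) \<Rightarrow> ('b \<Rightarrow> int) \<Rightarrow> int \<Rightarrow> int \<Rightarrow> real" where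
  "Q_prod M X Y h y y' = measure M {\<omega> \<in> space M. h (X \<omega>) = y} * measure M {\<omega> \<in> space M. Y \<omega> = y'}"

definition f_div :: "(real \<Rightarrow> real) \<Rightarrow> (int \<Rightarrow> int \<Rightarrow> real) \<Rightarrow> (int \<Rightarrow> int \<Rightarrow> real) \<Rightarrow> real" where
  "f_div f p q = (\<Sum>(y, y') \<in> labels \<times> labels. q y y' * f (p y y' / q y y'))"

definition f_TV :: "real \<Rightarrow> real" where "f_TV v = \<bar>v - 1\<bar> / 2"

definition div_obj :: "(real \<Rightarrow> real) \<Rightarrow> 'a measure \<Rightarrow> ('a \<Rightarrow> 'b) \<Rightarrow> ('a \<Rightarrow> int) \<Rightarrow> ('b \<Rightarrow> int) \<Rightarrow> real" where
  "div_obj f M X Y h = f_div f (P_joint M X Y h) (Q_prod M X Y h)"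

definition accuracy :: "'a measure \<Rightarrow> ('a \<Rightarrow> 'b) \<Rightarrow> ('a \<Rightarrow> int) \<Rightarrow> ('b \<Rightarrow> int) \<Rightarrow> real" where
  "accuracy M X Y h = measure M {\<omega> \<in> space M. h (X \<omega>) = Y \<omega>}"

end

theory Submission
  imports Defs
begin

text \<open>
  For a classifier h put A = {h = 1} and s(A) = P(X \<in> A, Y = 1) - P(X \<in> A, Y = -1).
  When both labels have probability 1/2, every cell of Q is P(h(X) = y)/2, and a direct computation
  on the four cells gives D_TV(P || Q) = |s(A)| and P(h(X) = Y) = 1/2 + s(A). Since s of the
  complement of A is -s(A), both objectives are maximised by the indicator classifier of a set
  maximising s; such a set exists by the Hahn decomposition of the two finite measures
  P(X \<in> _, Y = 1) and P(X \<in> _, Y = -1).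
\<close>

lemma finite_measure_diff_attains_max:
  assumes m1: "finite_measure m1" and m2: "finite_measure m2" and sets_eq: "sets m2 = sets m1"
  shows "\<exists>Z\<in>sets m1. \<forall>A\<in>sets m1. measure m1 A - measure m2 A \<le> measure m1 Z - measure m2 Z"
proof -
  interpret m1: finite_measure m1 by fact
  interpret m2: finite_measure m2 by fact
  obtain Z where Z: "Z \<in> sets m1"
    and pos: "\<And>B. B \<in> sets m1 \<Longrightarrow> B \<subseteq> Z \<Longrightarrow> measure m2 B \<le> measure m1 B"
    and neg: "\<And>B. B \<in> sets m1 \<Longrightarrow> B \<inter> Z = {} \<Longrightarrow> measure m1 B \<le> measure m2 B"
    using finite_unsigned_Hahn_decomposition[OF m1 m2 sets_eq]
    by (auto simp: m1.emeasure_eq_measure m2.emeasure_eq_measure)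
  have "measure m1 A - measure m2 A \<le> measure m1 Z - measure m2 Z" if A: "A \<in> sets m1" for A
  proof -
    have "measure m1 A - measure m2 A
        = (measure m1 (A \<inter> Z) - measure m2 (A \<inter> Z)) + (measure m1 (A - Z) - measure m2 (A - Z))"
      using A Z sets_eq by (simp add: m1.finite_measure_Diff' m2.finite_measure_Diff')
    also have "\<dots> \<le> measure m1 (A \<inter> Z) - measure m2 (A \<inter> Z)"
      using neg[of "A - Z"] A Z by auto
    also have "\<dots> \<le> (measure m1 (A \<inter> Z) - measure m2 (A \<inter> Z)) + (measure m1 (Z - A) - measure m2 (Z - A))"
      using pos[of "Z - A"] A Z by auto
    also have "\<dots> = measure m1 Z - measure m2 Z"
      using A Z sets_eq by (simp add: m1.finite_measure_Diff' m2.finite_measure_Diff' Int_commute)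
    finally show ?thesis .
  qed
  then show ?thesis using Z by blast
qed

lemma measure_distr_restrict_space:
  assumes "X \<in> measurable M N" "S \<in> sets M" "A \<in> sets N"
  shows "measure (distr (restrict_space M S) N X) A = measure M {\<omega>\<in>space M. X \<omega> \<in> A \<and> \<omega> \<in> S}"
proof -
  have "measure (distr (restrict_space M S) N X) A = measure (restrict_space M S) (X -` A \<inter> S)"
    using assms sets.sets_into_space[OF assms(2)]
    by (simp add: measure_distr measurable_restrict_space1 space_restrict_space Int_absorb1)
  also have "\<dots> = measure M (X -` A \<inter> S)"
    using assms(2) by (intro measure_restrict_space) auto
  also have "X -` A \<inter> S = {\<omega>\<in>space M. X \<omega> \<in> A \<and> \<omega> \<in> S}"
    using sets.sets_into_space[OF assms(2)] by auto
  finally show ?thesis .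
qed

definition class_margin :: "'a measure \<Rightarrow> ('a \<Rightarrow> 'b) \<Rightarrow> ('a \<Rightarrow> int) \<Rightarrow> 'b set \<Rightarrow> real" where
  "class_margin M X Y A =
     measure M {\<omega>\<in>space M. X \<omega> \<in> A \<and> Y \<omega> = 1} - measure M {\<omega>\<in>space M. X \<omega> \<in> A \<and> Y \<omega> = -1}"

lemma class_margin_attains_max:
  assumes "finite_measure M" "X \<in> measurable M N" "Y \<in> measurable M (count_space UNIV)"
  shows "\<exists>Z\<in>sets N. \<forall>A\<in>sets N. class_margin M X Y A \<le> class_margin M X Y Z"
proof -
  define law where "law y = distr (restrict_space M {\<omega>\<in>space M. Y \<omega> = y}) N X" for y :: int
  have label_set: "{\<omega>\<in>space M. Y \<omega> = y} \<in> sets M" for y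
    using assms(3) by measurable
  have "finite_measure (law y)" for y
    unfolding law_def using assms(1,2) label_set
    by (intro finite_measure.finite_measure_distr finite_measure_restrict_space measurable_restrict_space1)
  moreover have "class_margin M X Y A = measure (law 1) A - measure (law (-1)) A" if "A \<in> sets N" for A
  proof -
    have "measure (law y) A = measure M {\<omega>\<in>space M. X \<omega> \<in> A \<and> Y \<omega> = y}" for y
      unfolding law_def measure_distr_restrict_space[OF assms(2) label_set that]
      by (rule arg_cong[where f = "measure M"]) auto
    then show ?thesis by (simp add: class_margin_def)
  qed
  ultimately show ?thesis
    using finite_measure_diff_attains_max[of "law 1" "law (-1)"] by (simp add: law_def)
qed

lemma f_TV_scaled:
  fixes p q :: real
  assumes "0 \<le> q" "q = 0 \<Longrightarrow> p = 0"
  shows "q * f_TV (p / q) = \<bar>p - q\<bar> / 2"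
proof (cases "q = 0")
  case False
  then have "q * (p / q - 1) = p - q"
    by (simp add: field_simps)
  then have "q * \<bar>p / q - 1\<bar> = \<bar>p - q\<bar>"
    using assms(1) by (metis abs_mult abs_of_nonneg)
  then show ?thesis by (simp add: f_TV_def)
qed (use assms in \<open>simp add: f_TV_def\<close>)

lemma sum_labels_times:
  "(\<Sum>(y, y') \<in> labels \<times> labels. F y y') = F 1 1 + F 1 (-1) + F (-1) 1 + F (-1) (-1)"
  by (simp add: labels_def ac_simps)

lemma classifier_indicator:
  assumes "Z \<in> sets N"
  shows "classifier N (\<lambda>x. if x \<in> Z then 1 else -1)"
  using assms by (auto simp: classifier_def labels_def measurable_If_set)

context prob_space
begin

lemma prob_label_split:
  assumes "W \<in> measurable M (count_space UNIV)" "\<forall>\<omega>\<in>space M. W \<omega> \<in> labels"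
    and "{\<omega>\<in>space M. P \<omega>} \<in> events"
  shows "prob {\<omega>\<in>space M. P \<omega>} = prob {\<omega>\<in>space M. P \<omega> \<and> W \<omega> = 1} + prob {\<omega>\<in>space M. P \<omega> \<and> W \<omega> = -1}"
proof -
  have "{\<omega>\<in>space M. P \<omega> \<and> W \<omega> = y} \<in> events" for y
    using assms(1,3) by measurable
  moreover have "{\<omega>\<in>space M. P \<omega>} = {\<omega>\<in>space M. P \<omega> \<and> W \<omega> = 1} \<union> {\<omega>\<in>space M. P \<omega> \<and> W \<omega> = -1}"
    using assms(2) by (auto simp: labels_def)
  ultimately show ?thesis
    by (simp add: finite_measure_Union disjoint_iff)
qed

lemma prob_balanced_label:
  assumes "V \<in> measurable M (count_space UNIV)" "\<forall>\<omega>\<in>space M. V \<omega> \<in> labels"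
    and "prob {\<omega>\<in>space M. V \<omega> = 1} = prob {\<omega>\<in>space M. V \<omega> = -1}"
    and "y \<in> labels"
  shows "prob {\<omega>\<in>space M. V \<omega> = y} = 1 / 2"
  using prob_label_split[OF assms(1,2), of "\<lambda>_. True"] assms(3,4) prob_space by (auto simp: labels_def)

lemma prob_label_pair_marginals:
  assumes [measurable]: "U \<in> measurable M (count_space UNIV)" "V \<in> measurable M (count_space UNIV)"
    and "\<forall>\<omega>\<in>space M. U \<omega> \<in> labels" "\<forall>\<omega>\<in>space M. V \<omega> \<in> labels"
  defines "cell y y' \<equiv> prob {\<omega>\<in>space M. U \<omega> = y \<and> V \<omega> = y'}"
  shows "prob {\<omega>\<in>space M. U \<omega> = y} = cell y 1 + cell y (-1)"
    and "prob {\<omega>\<in>space M. V \<omega> = y'} = cell 1 y' + cell (-1) y'"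
    and "prob {\<omega>\<in>space M. U \<omega> = V \<omega>} = cell 1 1 + cell (-1) (-1)"
proof -
  show "prob {\<omega>\<in>space M. U \<omega> = y} = cell y 1 + cell y (-1)"
    unfolding cell_def by (rule prob_label_split[OF assms(2,4)]) measurable
  show "prob {\<omega>\<in>space M. V \<omega> = y'} = cell 1 y' + cell (-1) y'"
  proof -
    have "{\<omega>\<in>space M. V \<omega> = y' \<and> U \<omega> = y} = {\<omega>\<in>space M. U \<omega> = y \<and> V \<omega> = y'}" for y
      by auto
    moreover have "{\<omega>\<in>space M. V \<omega> = y'} \<in> events"
      by measurable
    ultimately show ?thesis
      unfolding cell_def using prob_label_split[OF assms(1,3), of "\<lambda>\<omega>. V \<omega> = y'"] by simp
  qed
  have "prob {\<omega>\<in>space M. U \<omega> = V \<omega>}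
      = prob {\<omega>\<in>space M. U \<omega> = V \<omega> \<and> V \<omega> = 1} + prob {\<omega>\<in>space M. U \<omega> = V \<omega> \<and> V \<omega> = -1}"
    by (rule prob_label_split[OF assms(2,4)]) measurable
  also have "\<dots> = cell 1 1 + cell (-1) (-1)"
    unfolding cell_def by (intro arg_cong2[where f = "(+)"] arg_cong[where f = prob]) auto
  finally show "prob {\<omega>\<in>space M. U \<omega> = V \<omega>} = cell 1 1 + cell (-1) (-1)" .
qed

lemma f_div_TV_balanced_labels:
  assumes U: "U \<in> measurable M (count_space UNIV)" and V: "V \<in> measurable M (count_space UNIV)"
    and U_labels: "\<forall>\<omega>\<in>space M. U \<omega> \<in> labels" and V_labels: "\<forall>\<omega>\<in>space M. V \<omega> \<in> labels"
    and balanced: "prob {\<omega>\<in>space M. V \<omega> = 1} = prob {\<omega>\<in>space M. V \<omega> = -1}"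
  defines "cell y y' \<equiv> prob {\<omega>\<in>space M. U \<omega> = y \<and> V \<omega> = y'}"
  shows "f_div f_TV cell (\<lambda>y y'. prob {\<omega>\<in>space M. U \<omega> = y} * prob {\<omega>\<in>space M. V \<omega> = y'})
    = \<bar>cell 1 1 - cell 1 (-1)\<bar>"
proof -
  note marginals = prob_label_pair_marginals[OF U V U_labels V_labels, folded cell_def]
  note half = prob_balanced_label[OF V V_labels balanced]
  have summand: "prob {\<omega>\<in>space M. U \<omega> = y} * prob {\<omega>\<in>space M. V \<omega> = y'}
      * f_TV (cell y y' / (prob {\<omega>\<in>space M. U \<omega> = y} * prob {\<omega>\<in>space M. V \<omega> = y'}))
    = \<bar>cell y y' - prob {\<omega>\<in>space M. U \<omega> = y} / 2\<bar> / 2" if "y' \<in> labels" for y y'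
  proof -
    have "cell y y' \<le> prob {\<omega>\<in>space M. U \<omega> = y}"
      unfolding cell_def using U by (intro finite_measure_mono) (auto simp: measurable_count_space_eq2)
    then have "prob {\<omega>\<in>space M. U \<omega> = y} / 2 * f_TV (cell y y' / (prob {\<omega>\<in>space M. U \<omega> = y} / 2))
        = \<bar>cell y y' - prob {\<omega>\<in>space M. U \<omega> = y} / 2\<bar> / 2"
      unfolding cell_def by (intro f_TV_scaled) (auto intro: order.antisym)
    then show ?thesis
      by (simp add: half[OF that])
  qed
  have "cell 1 y' + cell (-1) y' = 1 / 2" if "y' \<in> labels" for y'
    using marginals(2)[of y'] half[OF that] by simp
  then have columns: "cell 1 1 + cell (-1) 1 = 1 / 2" "cell 1 (-1) + cell (-1) (-1) = 1 / 2"
    by (simp_all add: labels_def)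
  have "f_div f_TV cell (\<lambda>y y'. prob {\<omega>\<in>space M. U \<omega> = y} * prob {\<omega>\<in>space M. V \<omega> = y'})
    = (\<bar>cell 1 1 - prob {\<omega>\<in>space M. U \<omega> = 1} / 2\<bar> / 2 + \<bar>cell 1 (-1) - prob {\<omega>\<in>space M. U \<omega> = 1} / 2\<bar> / 2)
      + (\<bar>cell (-1) 1 - prob {\<omega>\<in>space M. U \<omega> = -1} / 2\<bar> / 2
         + \<bar>cell (-1) (-1) - prob {\<omega>\<in>space M. U \<omega> = -1} / 2\<bar> / 2)"
    unfolding f_div_def sum_labels_times by (simp add: summand labels_def)
  also have "\<dots> = \<bar>cell 1 1 - cell 1 (-1)\<bar>"
    using columns by (simp add: marginals(1) abs_if field_simps)
  finally show ?thesis .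
qed

lemma prob_agree_balanced_labels:
  assumes U: "U \<in> measurable M (count_space UNIV)" and V: "V \<in> measurable M (count_space UNIV)"
    and U_labels: "\<forall>\<omega>\<in>space M. U \<omega> \<in> labels" and V_labels: "\<forall>\<omega>\<in>space M. V \<omega> \<in> labels"
    and balanced: "prob {\<omega>\<in>space M. V \<omega> = 1} = prob {\<omega>\<in>space M. V \<omega> = -1}"
  shows "prob {\<omega>\<in>space M. U \<omega> = V \<omega>}
    = 1 / 2 + prob {\<omega>\<in>space M. U \<omega> = 1 \<and> V \<omega> = 1} - prob {\<omega>\<in>space M. U \<omega> = 1 \<and> V \<omega> = -1}"
  using prob_label_pair_marginals(2)[OF U V U_labels V_labels, of "-1"]
    prob_label_pair_marginals(3)[OF U V U_labels V_labels]
    prob_balanced_label[OF V V_labels balanced, of "-1"]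
  by (simp add: labels_def)

lemma class_margin_compl:
  assumes [measurable]: "X \<in> measurable M N" "Y \<in> measurable M (count_space UNIV)" "A \<in> sets N"
    and balanced: "prob {\<omega>\<in>space M. Y \<omega> = 1} = prob {\<omega>\<in>space M. Y \<omega> = -1}"
  shows "class_margin M X Y (space N - A) = - class_margin M X Y A"
proof -
  have "prob {\<omega>\<in>space M. X \<omega> \<in> A \<and> Y \<omega> = y} + prob {\<omega>\<in>space M. X \<omega> \<in> space N - A \<and> Y \<omega> = y}
      = prob {\<omega>\<in>space M. Y \<omega> = y}" for y
  proof -
    have "{\<omega>\<in>space M. Y \<omega> = y}
        = {\<omega>\<in>space M. X \<omega> \<in> A \<and> Y \<omega> = y} \<union> {\<omega>\<in>space M. X \<omega> \<in> space N - A \<and> Y \<omega> = y}"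
      using measurable_space[OF assms(1)] by auto
    moreover have "{\<omega>\<in>space M. X \<omega> \<in> A \<and> Y \<omega> = y} \<in> events"
      "{\<omega>\<in>space M. X \<omega> \<in> space N - A \<and> Y \<omega> = y} \<in> events"
      by measurable
    ultimately show ?thesis
      by (simp add: finite_measure_Union disjoint_iff)
  qed
  from this[of 1] this[of "-1"] show ?thesis
    using balanced by (simp add: class_margin_def)
qed

lemma classifier_class_margin:
  assumes X: "X \<in> measurable M N" and Y: "Y \<in> measurable M (count_space UNIV)"
    and Y_labels: "\<forall>\<omega>\<in>space M. Y \<omega> \<in> labels"
    and balanced: "prob {\<omega>\<in>space M. Y \<omega> = 1} = prob {\<omega>\<in>space M. Y \<omega> = -1}"
    and h: "classifier N h"
  shows "div_obj f_TV M X Y h = \<bar>class_margin M X Y {x\<in>space N. h x = 1}\<bar>"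
    and "accuracy M X Y h = 1 / 2 + class_margin M X Y {x\<in>space N. h x = 1}"
proof -
  have hX: "(\<lambda>\<omega>. h (X \<omega>)) \<in> measurable M (count_space UNIV)"
    using h X by (auto simp: classifier_def)
  have hX_labels: "\<forall>\<omega>\<in>space M. h (X \<omega>) \<in> labels"
    using h measurable_space[OF X] by (auto simp: classifier_def)
  have "class_margin M X Y {x\<in>space N. h x = 1}
      = prob {\<omega>\<in>space M. h (X \<omega>) = 1 \<and> Y \<omega> = 1} - prob {\<omega>\<in>space M. h (X \<omega>) = 1 \<and> Y \<omega> = -1}"
    unfolding class_margin_def using measurable_space[OF X]
    by (intro arg_cong2[where f = "(-)"] arg_cong[where f = prob]) auto
  then show "div_obj f_TV M X Y h = \<bar>class_margin M X Y {x\<in>space N. h x = 1}\<bar>"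
    and "accuracy M X Y h = 1 / 2 + class_margin M X Y {x\<in>space N. h x = 1}"
    using f_div_TV_balanced_labels[OF hX Y hX_labels Y_labels balanced]
      prob_agree_balanced_labels[OF hX Y hX_labels Y_labels balanced]
    by (simp_all add: div_obj_def P_joint_def[abs_def] Q_prod_def[abs_def] accuracy_def)
qed

end

theorem theorem1:
  fixes M :: "'a measure" and N :: "'b measure"
    and X :: "'a \<Rightarrow> 'b" and Y :: "'a \<Rightarrow> int"
  assumes "prob_space M"
    and "X \<in> measurable M N"
    and "Y \<in> measurable M (count_space UNIV)"
    and "\<forall>\<omega>\<in>space M. Y \<omega> \<in> labels"
    and "measure M {\<omega> \<in> space M. Y \<omega> = 1} = measure M {\<omega> \<in> space M. Y \<omega> = -1}"
  shows "\<exists>hstar. classifier N hstar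
           \<and> (\<forall>h. classifier N h \<longrightarrow> div_obj f_TV M X Y h \<le> div_obj f_TV M X Y hstar)
           \<and> (\<forall>h. classifier N h \<longrightarrow> accuracy M X Y h \<le> accuracy M X Y hstar)"
proof -
  interpret prob_space M by fact
  let ?margin = "class_margin M X Y"
  obtain Z where Z: "Z \<in> sets N" and Z_max: "\<And>A. A \<in> sets N \<Longrightarrow> ?margin A \<le> ?margin Z"
    using class_margin_attains_max[OF finite_measure assms(2,3)] by blast
  define hstar where "hstar x = (if x \<in> Z then 1 else -1 :: int)" for x
  have hstar: "classifier N hstar"
    unfolding hstar_def using Z by (rule classifier_indicator)
  have "{x\<in>space N. hstar x = 1} = Z"
    using sets.sets_into_space[OF Z] by (auto simp: hstar_def)
  then have hstar_margin: "div_obj f_TV M X Y hstar = ?margin Z" "accuracy M X Y hstar = 1 / 2 + ?margin Z"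
    using classifier_class_margin[OF assms(2-5) hstar] Z_max[of "{}"] by (auto simp: class_margin_def)
  have "div_obj f_TV M X Y h \<le> ?margin Z" "accuracy M X Y h \<le> 1 / 2 + ?margin Z"
    if h: "classifier N h" for h
  proof -
    have A: "{x\<in>space N. h x = 1} \<in> sets N"
      using h by (auto simp: classifier_def)
    show "div_obj f_TV M X Y h \<le> ?margin Z" "accuracy M X Y h \<le> 1 / 2 + ?margin Z"
      using classifier_class_margin[OF assms(2-5) h] Z_max[OF A] Z_max[OF sets.compl_sets[OF A]]
        class_margin_compl[OF assms(2,3) A assms(5)] by auto
  qed
  then show ?thesis
    using hstar hstar_margin by auto
qed

end
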